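(* Let $b_s$ be a finite bridge. Then $\mathscr{D}(b_s)=\mathrm{llip}(b_s)$, where $\mathrm{llip}(f)=\sup\{\kappa\in[0,\infty): \forall y,z\in[0,1],\ |f(y)-f(z)|\ge\kappa|y-z|\}$.
   Context: Let $\mathcal{P}_{\mathcal{M}}$ be the set of sequences $s=(s_i)_{i\ge1}$ with $s_1\ge s_2\ge\dots\ge0$ and $\sum_i s_i\le1$; put $s_0=1-\sum_i s_i$. Given $s\in\mathcal{P}_{\mathcal{M}}$ and i.i.d. uniform $[0,1]$ random variables $(U_i)$ independent of $s$, the $s$-bridge is $b_s(y)=s_0y+\sum_{i\ge1}s_i\mathbf{1}\{U_i\le y\}$. It is a finite bridge if only finitely many $s_i$ are nonzero. For increasing $f$, $f^{-1}(y)=\inf\{z:f(z)>y\}$. The paintbox partition of $b_s$: with $(V_i)$ i.i.d. uniform independent of everything, $i\sim j$ iff $b_s^{-1}(V_i)=b_s^{-1}(V_j)$; this is an exchangeable partition $\pi$ of $\mathbb{N}$. $\mathscr{D}(b_s)$ denotes the dust of this partition, $\mathscr{D}(\pi)=1-\sum_{b\in\pi}\mathrm{freq}(b)$, where $\mathrm{freq}(b)=\lim_k|b\cap\{1,\dots,k\}|/k$ is the asymptotic frequency of a block $b$. *)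

theory Defs
  imports "HOL-Probability.Probability"
begin

text \<open>The s-bridge. The paper's sequence (s_i)_{i>=1} is encoded as p with p i = s_(i+1);
  s_0 = 1 - sum of the p i. u i plays the role of U_(i+1).\<close>
definition bridge :: "(nat \<Rightarrow> real) \<Rightarrow> (nat \<Rightarrow> real) \<Rightarrow> real \<Rightarrow> real" where
  "bridge p u y = (1 - (\<Sum>i. p i)) * y + (\<Sum>i. p i * indicator {..y} (u i))"

definition gen_inv :: "(real \<Rightarrow> real) \<Rightarrow> real \<Rightarrow> real" where
  "gen_inv f y = Inf {z \<in> {0..1}. f z > y}"

definition asym_freq :: "nat set \<Rightarrow> real" where
  "asym_freq B = lim (\<lambda>k. real (card (B \<inter> {1..k})) / real k)"

definition paintbox_partition :: "(real \<Rightarrow> real) \<Rightarrow> (nat \<Rightarrow> real) \<Rightarrow> nat set set" where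
  "paintbox_partition f v =
     {{j. j \<ge> 1 \<and> gen_inv f (v j) = gen_inv f (v i)} | i. i \<ge> 1}"

definition dust :: "nat set set \<Rightarrow> real" where
  "dust P = 1 - (\<Sum>\<^sub>\<infinity> B\<in>P. asym_freq B)"

definition llip :: "(real \<Rightarrow> real) \<Rightarrow> real" where
  "llip f = Sup {\<kappa>. \<kappa> \<ge> 0 \<and> (\<forall>y\<in>{0..1}. \<forall>z\<in>{0..1}. \<bar>f y - f z\<bar> \<ge> \<kappa> * \<bar>y - z\<bar>)}"

end

theory Submission
  imports Defs
begin

text \<open>A finite bridge b increases at least at rate s_0 everywhere and exactly at rate s_0
  on a neighbourhood of 0 free of atoms U_i, so llip b = s_0. For the dust,
  gen_inv b y = z essentially iff y lies in [b(z-), b(z)), an interval whose length is the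
  total mass of the atoms sitting at z. By Hoeffding's inequality and Borel-Cantelli the
  sequence (V_j) is almost surely equidistributed, so the block labelled z has exactly this
  frequency; the blocks carry total frequency 1 - s_0 and the dust is s_0.\<close>

lemma (in prob_space) indep_vars_reindex:
  assumes inj: "inj_on f I" and indep: "indep_vars M' X (f ` I)"
  shows "indep_vars (\<lambda>i. M' (f i)) (\<lambda>i. X (f i)) I"
proof -
  let ?F = "\<lambda>i. {X i -` S \<inter> space M | S. S \<in> sets (M' i)}"
  have rv: "\<And>i. i \<in> f ` I \<Longrightarrow> random_variable (M' i) (X i)" and ind: "indep_sets ?F (f ` I)"
    using indep unfolding indep_vars_def2 by auto
  have "indep_sets (\<lambda>i. ?F (f i)) I"
  proof (rule indep_setsI)
    show "?F (f i) \<subseteq> events" if "i \<in> I" for i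
      using rv that by auto
    fix A J assume J: "J \<noteq> {}" "J \<subseteq> I" "finite J" and A: "\<forall>j\<in>J. A j \<in> ?F (f j)"
    have injJ: "inj_on f J" using inj J(2) by (rule inj_on_subset)
    define B where "B = (\<lambda>k. A (the_inv_into J f k))"
    have BA: "\<And>j. j \<in> J \<Longrightarrow> B (f j) = A j"
      using injJ by (simp add: B_def the_inv_into_f_f)
    have "prob (\<Inter>k\<in>f ` J. B k) = (\<Prod>k\<in>f ` J. prob (B k))"
      by (rule indep_setsD[OF ind]) (use J A BA in auto)
    then show "prob (\<Inter>j\<in>J. A j) = (\<Prod>j\<in>J. prob (A j))"
      by (simp add: prod.reindex[OF injJ] BA)
  qed
  then show ?thesis
    using rv unfolding indep_vars_def2 by auto
qed

lemma (in prob_space) AE_eventually_average_close_iid: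
  fixes X :: "nat \<Rightarrow> 'a \<Rightarrow> real"
  assumes indep: "indep_vars (\<lambda>_. borel) X UNIV"
    and distr_X: "\<And>i. distr M borel (X i) = distr M borel Y"
    and Y: "random_variable borel Y" and bounded: "AE \<omega> in M. Y \<omega> \<in> {a..b}" and "a < b" and "\<epsilon> > 0"
  shows "AE \<omega> in M. eventually (\<lambda>n. \<bar>(\<Sum>i<n. X i \<omega>) / n - expectation Y\<bar> < \<epsilon>) sequentially"
proof -
  have [measurable]: "X i \<in> borel_measurable M" for i
    using indep unfolding indep_vars_def by auto
  define A where "A n = {\<omega>\<in>space M. \<bar>(\<Sum>i<Suc n. X i \<omega>) / Suc n - expectation Y\<bar> \<ge> \<epsilon>}" for n
  have [measurable]: "A n \<in> sets M" for n
    unfolding A_def by measurable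
  define r where "r = exp (- 2 * \<epsilon>\<^sup>2 / (b - a)\<^sup>2)"
  have r: "0 \<le> r" "r < 1"
    using \<open>\<epsilon> > 0\<close> \<open>a < b\<close> by (auto simp: r_def)
  have prob_A: "prob (A n) \<le> 2 * r * r ^ n" for n
  proof -
    interpret Hoeffding_ineq_iid M "{..<Suc n}" X Y a b "expectation Y"
    proof unfold_locales
      show "indep_vars (\<lambda>_. borel) X {..<Suc n}"
        using indep by (rule indep_vars_subset) simp
    qed (use Y bounded distr_X in simp_all)
    have "r ^ Suc n = exp (- 2 * real (Suc n) * \<epsilon>\<^sup>2 / (b - a)\<^sup>2)"
      unfolding r_def exp_of_nat_mult[symmetric] by (simp add: divide_simps algebra_simps)
    moreover have "prob (A n) \<le> 2 * exp (- 2 * real (Suc n) * \<epsilon>\<^sup>2 / (b - a)\<^sup>2)"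
      using Hoeffding_ineq_abs_ge'[of \<epsilon>, OF less_imp_le[OF \<open>\<epsilon> > 0\<close>] \<open>a < b\<close>]
      unfolding A_def card_lessThan by (simp add: lessThan_empty_iff)
    ultimately show ?thesis by simp
  qed
  have "summable (\<lambda>n. 2 * r * r ^ n)"
    using r by (intro summable_mult summable_geometric) simp
  then have "summable (\<lambda>n. measure M (A n))"
    by (rule summable_comparison_test'[where N = 0]) (simp add: prob_A)
  then have "AE \<omega> in M. eventually (\<lambda>n. \<omega> \<in> space M - A n) sequentially"
    by (intro borel_cantelli_AE1) (auto simp: less_top[symmetric])
  then show ?thesis
  proof (rule eventually_mono)
    fix \<omega> assume "eventually (\<lambda>n. \<omega> \<in> space M - A n) sequentially"
    then have "eventually (\<lambda>n. \<bar>(\<Sum>i<Suc n. X i \<omega>) / Suc n - expectation Y\<bar> < \<epsilon>) sequentially"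
      by (rule eventually_mono) (auto simp: A_def)
    then show "eventually (\<lambda>n. \<bar>(\<Sum>i<n. X i \<omega>) / n - expectation Y\<bar> < \<epsilon>) sequentially"
      by (subst eventually_sequentially_Suc[symmetric])
  qed
qed

lemma (in prob_space) strong_law_bounded_iid:
  fixes X :: "nat \<Rightarrow> 'a \<Rightarrow> real"
  assumes indep: "indep_vars (\<lambda>_. borel) X UNIV"
    and distr_X: "\<And>i. distr M borel (X i) = distr M borel Y"
    and Y: "random_variable borel Y" and bounded: "AE \<omega> in M. Y \<omega> \<in> {a..b}" and "a < b"
  shows "AE \<omega> in M. (\<lambda>n. (\<Sum>i<n. X i \<omega>) / n) \<longlonglongrightarrow> expectation Y"
proof -
  have "AE \<omega> in M. \<forall>m. eventually
      (\<lambda>n. \<bar>(\<Sum>i<n. X i \<omega>) / n - expectation Y\<bar> < inverse (Suc m)) sequentially"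
    unfolding AE_all_countable
    by (intro allI AE_eventually_average_close_iid[OF assms]) auto
  then show ?thesis
  proof (rule eventually_mono)
    fix \<omega> assume close: "\<forall>m. eventually
      (\<lambda>n. \<bar>(\<Sum>i<n. X i \<omega>) / n - expectation Y\<bar> < inverse (Suc m)) sequentially"
    show "(\<lambda>n. (\<Sum>i<n. X i \<omega>) / n) \<longlonglongrightarrow> expectation Y"
    proof (rule tendstoI)
      fix e :: real assume "e > 0"
      then obtain m where "inverse (Suc m) < e"
        using reals_Archimedean by blast
      with close show "eventually (\<lambda>n. dist ((\<Sum>i<n. X i \<omega>) / n) (expectation Y) < e) sequentially"
        by (auto elim!: allE[of _ m] eventually_mono simp: dist_real_def)
    qed
  qed
qed

definition emp_freq :: "(nat \<Rightarrow> real) \<Rightarrow> real set \<Rightarrow> nat \<Rightarrow> real" where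
  "emp_freq v S k = real (card {j\<in>{1..k}. v j \<in> S}) / k"

text \<open>Only rational thresholds, so that almost sure equidistribution is a countable
  intersection of events; all real thresholds follow by monotonicity.\<close>
definition equidistributed :: "(nat \<Rightarrow> real) \<Rightarrow> bool" where
  "equidistributed v \<longleftrightarrow> (\<forall>q\<in>\<rat>. (\<lambda>k. emp_freq v {..<q} k) \<longlonglongrightarrow> max 0 (min q 1))"

lemma emp_freq_mono:
  assumes "S \<subseteq> T"
  shows "emp_freq v S k \<le> emp_freq v T k"
proof -
  have "card {j\<in>{1..k}. v j \<in> S} \<le> card {j\<in>{1..k}. v j \<in> T}"
    using assms by (intro card_mono) auto
  then show ?thesis
    unfolding emp_freq_def by (simp add: divide_right_mono)
qed

lemma emp_freq_Un_disjoint: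
  assumes "S \<inter> T = {}"
  shows "emp_freq v (S \<union> T) k = emp_freq v S k + emp_freq v T k"
proof -
  have "{j\<in>{1..k}. v j \<in> S \<union> T} = {j\<in>{1..k}. v j \<in> S} \<union> {j\<in>{1..k}. v j \<in> T}"
    "{j\<in>{1..k}. v j \<in> S} \<inter> {j\<in>{1..k}. v j \<in> T} = {}"
    using assms by auto
  then show ?thesis
    unfolding emp_freq_def by (simp add: card_Un_disjoint add_divide_distrib)
qed

lemma emp_freq_eq_average: "emp_freq v S k = (\<Sum>i<k. indicator S (v (Suc i))) / k"
proof -
  have "(\<Sum>i<k. indicator S (v (Suc i)) :: real) = (\<Sum>j\<in>{1..k}. indicator S (v j))"
    by (rule sum.reindex_bij_witness[where i = "\<lambda>j. j - 1" and j = Suc]) auto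
  also have "\<dots> = card {j\<in>{1..k}. v j \<in> S}"
    by (simp add: indicator_def sum.If_cases) (intro arg_cong[where f = card]; auto)
  finally show ?thesis unfolding emp_freq_def by simp
qed

lemma tendsto_sandwich_rat_dense:
  fixes F :: "real \<Rightarrow> nat \<Rightarrow> real" and G :: "real \<Rightarrow> real"
  assumes below: "\<And>q k. q \<in> \<rat> \<Longrightarrow> q < x \<Longrightarrow> F q k \<le> H k"
    and above: "\<And>q k. q \<in> \<rat> \<Longrightarrow> x < q \<Longrightarrow> H k \<le> F q k"
    and lim: "\<And>q. q \<in> \<rat> \<Longrightarrow> (\<lambda>k. F q k) \<longlonglongrightarrow> G q"
    and cont: "isCont G x"
  shows "H \<longlonglongrightarrow> G x"
proof (rule order_tendstoI)
  fix c assume "c < G x"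
  have "eventually (\<lambda>y. c < G y) (at x)"
    using cont \<open>c < G x\<close> unfolding isCont_def by (rule order_tendstoD)
  then obtain \<delta> where "\<delta> > 0" and \<delta>: "\<And>y. y \<noteq> x \<Longrightarrow> dist y x < \<delta> \<Longrightarrow> c < G y"
    unfolding eventually_at by blast
  obtain q where q: "q \<in> \<rat>" "x - \<delta> < q" "q < x"
    using Rats_dense_in_real[of "x - \<delta>" x] \<open>\<delta> > 0\<close> by auto
  then have "c < G q" using \<delta>[of q] by (simp add: dist_real_def)
  with lim[OF q(1)] have "eventually (\<lambda>k. c < F q k) sequentially"
    by (rule order_tendstoD)
  then show "eventually (\<lambda>k. c < H k) sequentially"
    by (rule eventually_mono) (use below[OF q(1,3)] in \<open>fastforce intro: less_le_trans\<close>)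
next
  fix c assume "G x < c"
  have "eventually (\<lambda>y. G y < c) (at x)"
    using cont \<open>G x < c\<close> unfolding isCont_def by (rule order_tendstoD)
  then obtain \<delta> where "\<delta> > 0" and \<delta>: "\<And>y. y \<noteq> x \<Longrightarrow> dist y x < \<delta> \<Longrightarrow> G y < c"
    unfolding eventually_at by blast
  obtain q where q: "q \<in> \<rat>" "x < q" "q < x + \<delta>"
    using Rats_dense_in_real[of x "x + \<delta>"] \<open>\<delta> > 0\<close> by auto
  then have "G q < c" using \<delta>[of q] by (simp add: dist_real_def)
  with lim[OF q(1)] have "eventually (\<lambda>k. F q k < c) sequentially"
    by (rule order_tendstoD)
  then show "eventually (\<lambda>k. H k < c) sequentially"
    by (rule eventually_mono) (use above[OF q(1,2)] in \<open>fastforce intro: le_less_trans\<close>)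
qed

lemma isCont_unit_clamp: "isCont (\<lambda>x::real. max 0 (min x 1)) x"
  by (intro continuous_intros)

lemma equidistributed_lessThan:
  assumes "equidistributed v"
  shows "(\<lambda>k. emp_freq v {..<x} k) \<longlonglongrightarrow> max 0 (min x 1)"
proof (rule tendsto_sandwich_rat_dense[where F = "\<lambda>q. emp_freq v {..<q}" and G = "\<lambda>y. max 0 (min y 1)" and x = x])
  show "emp_freq v {..<q} k \<le> emp_freq v {..<x} k" if "q \<in> \<rat>" "q < x" for q k
    using that by (intro emp_freq_mono) auto
  show "emp_freq v {..<x} k \<le> emp_freq v {..<q} k" if "q \<in> \<rat>" "x < q" for q k
    using that by (intro emp_freq_mono) auto
qed (use assms in \<open>simp_all add: equidistributed_def isCont_unit_clamp\<close>)

lemma equidistributed_atMost: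
  assumes "equidistributed v"
  shows "(\<lambda>k. emp_freq v {..x} k) \<longlonglongrightarrow> max 0 (min x 1)"
proof (rule tendsto_sandwich_rat_dense[where F = "\<lambda>q. emp_freq v {..<q}" and G = "\<lambda>y. max 0 (min y 1)" and x = x])
  show "emp_freq v {..<q} k \<le> emp_freq v {..x} k" if "q \<in> \<rat>" "q < x" for q k
    using that by (intro emp_freq_mono) auto
  show "emp_freq v {..x} k \<le> emp_freq v {..<q} k" if "q \<in> \<rat>" "x < q" for q k
    using that by (intro emp_freq_mono) auto
qed (use assms in \<open>simp_all add: equidistributed_def isCont_unit_clamp\<close>)

lemma equidistributed_interval_freq:
  assumes "equidistributed v" and "0 \<le> a" "a \<le> b" "b \<le> 1"
    and lower: "{j. j \<ge> 1 \<and> v j \<in> {a..<b}} \<subseteq> T" and upper: "T \<subseteq> {j. v j \<in> {a..b}}"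
  shows "(\<lambda>k. real (card (T \<inter> {1..k})) / k) \<longlonglongrightarrow> b - a"
proof (rule tendsto_sandwich)
  have split: "{..<b} = {..<a} \<union> {a..<b}" "{..b} = {..<a} \<union> {a..b}"
    using \<open>a \<le> b\<close> by auto
  have disj: "{..<a} \<inter> {a..<b} = {}" "{..<a} \<inter> {a..b} = {}"
    by auto
  have "emp_freq v {a..<b} k = emp_freq v {..<b} k - emp_freq v {..<a} k" for k
    using emp_freq_Un_disjoint[OF disj(1), of v k] unfolding split(1) by simp
  moreover have "emp_freq v {a..b} k = emp_freq v {..b} k - emp_freq v {..<a} k" for k
    using emp_freq_Un_disjoint[OF disj(2), of v k] unfolding split(2) by simp
  moreover have "(\<lambda>k. emp_freq v {..<a} k) \<longlonglongrightarrow> a"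
    and "(\<lambda>k. emp_freq v {..<b} k) \<longlonglongrightarrow> b" and "(\<lambda>k. emp_freq v {..b} k) \<longlonglongrightarrow> b"
    using equidistributed_lessThan[OF assms(1), of a] equidistributed_lessThan[OF assms(1), of b]
      equidistributed_atMost[OF assms(1), of b] assms(2-4) by simp_all
  ultimately show "(\<lambda>k. emp_freq v {a..<b} k) \<longlonglongrightarrow> b - a" "(\<lambda>k. emp_freq v {a..b} k) \<longlonglongrightarrow> b - a"
    by (simp_all add: tendsto_diff)
  show "eventually (\<lambda>k. emp_freq v {a..<b} k \<le> real (card (T \<inter> {1..k})) / k) sequentially"
  proof (intro always_eventually allI)
    fix k
    have "card {j\<in>{1..k}. v j \<in> {a..<b}} \<le> card (T \<inter> {1..k})"
      using lower by (intro card_mono) auto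
    then show "emp_freq v {a..<b} k \<le> real (card (T \<inter> {1..k})) / k"
      unfolding emp_freq_def by (simp add: divide_right_mono)
  qed
  show "eventually (\<lambda>k. real (card (T \<inter> {1..k})) / k \<le> emp_freq v {a..b} k) sequentially"
  proof (intro always_eventually allI)
    fix k
    have "card (T \<inter> {1..k}) \<le> card {j\<in>{1..k}. v j \<in> {a..b}}"
      using upper by (intro card_mono) auto
    then show "real (card (T \<inter> {1..k})) / k \<le> emp_freq v {a..b} k"
      unfolding emp_freq_def by (simp add: divide_right_mono)
  qed
qed

lemma measure_uniform_unit_lessThan:
  "measure (uniform_measure lborel {0..1::real}) {..<q} = max 0 (min q 1)"
proof -
  consider "q \<le> 0" | "0 < q" "q \<le> 1" | "1 < q"
    by linarith
  then have "measure lborel ({0..1} \<inter> {..<q}) = max 0 (min q 1)"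
  proof cases
    case 1
    then have "{0..1} \<inter> {..<q} = {}" by auto
    with 1 show ?thesis by simp
  next
    case 2
    then have "{0..1} \<inter> {..<q} = {0..<q}" by auto
    with 2 show ?thesis by simp
  next
    case 3
    then have "{0..1} \<inter> {..<q} = {0..1}" by auto
    with 3 show ?thesis by simp
  qed
  moreover have "measure (uniform_measure lborel {0..1::real}) {..<q}
      = measure lborel ({0..1} \<inter> {..<q}) / measure lborel {0..1::real}"
    by (rule measure_uniform_measure) auto
  ultimately show ?thesis by simp
qed

lemma (in prob_space) equidistributed_AE:
  fixes V :: "nat \<Rightarrow> 'a \<Rightarrow> real"
  assumes indep: "indep_vars (\<lambda>_. borel) V UNIV"
    and uniform: "\<And>j. distr M borel (V j) = uniform_measure lborel {0..1}"
  shows "AE \<omega> in M. equidistributed (\<lambda>j. V j \<omega>)"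
proof -
  have [measurable]: "V j \<in> borel_measurable M" for j
    using indep unfolding indep_vars_def by auto
  have "AE \<omega> in M. (\<lambda>k. emp_freq (\<lambda>j. V j \<omega>) {..<q} k) \<longlonglongrightarrow> max 0 (min q 1)" for q
  proof -
    define Y where "Y = (\<lambda>\<omega>. indicator {..<q} (V 0 \<omega>) :: real)"
    define X where "X = (\<lambda>i \<omega>. indicator {..<q} (V (Suc i) \<omega>) :: real)"
    have "indep_vars (\<lambda>_. borel) (\<lambda>i. V (Suc i)) UNIV"
      using indep_vars_reindex[of Suc UNIV "\<lambda>_. borel" V] indep_vars_subset[OF indep] by simp
    then have "indep_vars (\<lambda>_. borel) X UNIV"
      unfolding X_def by (rule indep_vars_compose2[where Y = "\<lambda>_. indicator {..<q}"]) simp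
    moreover have "distr M borel (X i) = distr M borel Y" for i
    proof -
      have "distr M borel (X i) = distr (distr M borel (V (Suc i))) borel (indicator {..<q})"
        by (subst distr_distr) (auto simp: X_def comp_def)
      also have "\<dots> = distr (distr M borel (V 0)) borel (indicator {..<q})"
        by (simp only: uniform)
      also have "\<dots> = distr M borel Y"
        by (subst distr_distr) (auto simp: Y_def comp_def)
      finally show ?thesis .
    qed
    moreover have "expectation Y = max 0 (min q 1)"
    proof -
      have "expectation Y = integral\<^sup>L (distr M borel (V 0)) (indicator {..<q})"
        by (subst integral_distr) (auto simp: Y_def)
      then show ?thesis
        by (simp add: uniform measure_uniform_unit_lessThan)
    qed
    ultimately have "AE \<omega> in M. (\<lambda>n. (\<Sum>i<n. X i \<omega>) / n) \<longlonglongrightarrow> max 0 (min q 1)"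
      using strong_law_bounded_iid[of X Y 0 1] by (simp add: Y_def indicator_def)
    then show ?thesis
      by (simp add: emp_freq_eq_average X_def)
  qed
  then show ?thesis
    unfolding equidistributed_def by (simp add: AE_ball_countable countable_rat)
qed

lemma mult_min_div_add_one_le:
  fixes a c d :: real
  assumes "0 \<le> a" "0 \<le> c"
  shows "a * min d (c / (a + 1)) \<le> c"
proof -
  have "a * min d (c / (a + 1)) \<le> a * (c / (a + 1))"
    using assms by (intro mult_left_mono) auto
  also have "\<dots> \<le> c"
    using assms by (simp add: field_simps)
  finally show ?thesis .
qed

locale finite_bridge =
  fixes p u :: "nat \<Rightarrow> real"
  assumes p_nonneg: "\<And>i. p i \<ge> 0" and p_suminf_le_1: "(\<Sum>i. p i) \<le> 1"
    and finite_atoms: "finite {i. p i \<noteq> 0}" and u_unit: "\<And>i. u i \<in> {0..1}"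
begin

abbreviation "atoms \<equiv> {i. p i \<noteq> 0}"
definition s0 :: real where "s0 = 1 - (\<Sum>i\<in>atoms. p i)"
abbreviation "bridge_left_lim z \<equiv> s0 * z + (\<Sum>i\<in>atoms. if u i < z then p i else 0)"
abbreviation "jump z \<equiv> (\<Sum>i\<in>atoms. if u i = z then p i else 0)"

lemma suminf_eq_sum_atoms: "(\<Sum>i. p i) = (\<Sum>i\<in>atoms. p i)"
  by (rule suminf_finite[OF finite_atoms]) auto

lemma s0_nonneg: "s0 \<ge> 0"
  using p_suminf_le_1 suminf_eq_sum_atoms by (simp add: s0_def)

lemma bridge_eq: "bridge p u y = s0 * y + (\<Sum>i\<in>atoms. if u i \<le> y then p i else 0)"
proof -
  have "(\<Sum>i. p i * indicator {..y} (u i)) = (\<Sum>i\<in>atoms. p i * indicator {..y} (u i))"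
    by (rule suminf_finite[OF finite_atoms]) auto
  also have "\<dots> = (\<Sum>i\<in>atoms. if u i \<le> y then p i else 0)"
    by (rule sum.cong) (auto simp: indicator_def)
  finally show ?thesis
    unfolding bridge_def suminf_eq_sum_atoms s0_def by simp
qed

lemma bridge_1: "bridge p u 1 = 1"
  using u_unit by (simp add: bridge_eq s0_def)

lemma bridge_increment_ge:
  assumes "y \<le> z"
  shows "s0 * (z - y) \<le> bridge p u z - bridge p u y"
proof -
  have "(\<Sum>i\<in>atoms. if u i \<le> y then p i else 0) \<le> (\<Sum>i\<in>atoms. if u i \<le> z then p i else 0)"
    using assms p_nonneg by (intro sum_mono) auto
  then show ?thesis
    unfolding bridge_eq by (simp add: algebra_simps)
qed

lemma bridge_le_1:
  assumes "z \<le> 1"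
  shows "bridge p u z \<le> 1"
proof -
  have "0 \<le> s0 * (1 - z)"
    using assms s0_nonneg by simp
  then show ?thesis
    using bridge_increment_ge[OF assms] bridge_1 by linarith
qed

lemma bridge_le_bridge_left_lim: "w < z \<Longrightarrow> bridge p u w \<le> bridge_left_lim z"
  unfolding bridge_eq using s0_nonneg p_nonneg
  by (intro add_mono mult_left_mono sum_mono) auto

lemma bridge_left_lim_le_bridge: "bridge_left_lim z \<le> bridge p u z"
  unfolding bridge_eq using p_nonneg by (intro add_mono sum_mono) auto

lemma bridge_left_lim_nonneg: "0 \<le> z \<Longrightarrow> 0 \<le> bridge_left_lim z"
  using s0_nonneg p_nonneg by (intro add_nonneg_nonneg sum_nonneg) auto

lemma bridge_minus_bridge_left_lim: "bridge p u z - bridge_left_lim z = jump z"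
  unfolding bridge_eq by (auto simp: sum_subtractf[symmetric] intro!: sum.cong)

lemma bridge_affine_right:
  obtains d where "d > 0" "\<And>w. z \<le> w \<Longrightarrow> w < z + d \<Longrightarrow> bridge p u w = bridge p u z + s0 * (w - z)"
proof -
  obtain d where "d > 0" and d: "\<And>x. x \<in> u ` atoms \<Longrightarrow> x \<noteq> z \<Longrightarrow> d \<le> dist z x"
    using finite_set_avoid[of "u ` atoms" z] finite_atoms by blast
  have "bridge p u w = bridge p u z + s0 * (w - z)" if "z \<le> w" "w < z + d" for w
  proof -
    have "u i \<le> w \<longleftrightarrow> u i \<le> z" if "i \<in> atoms" for i
      using d[of "u i"] that \<open>z \<le> w\<close> \<open>w < z + d\<close> by (cases "u i = z") (auto simp: dist_real_def)
    then have "(\<Sum>i\<in>atoms. if u i \<le> w then p i else 0) = (\<Sum>i\<in>atoms. if u i \<le> z then p i else 0)"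
      by (intro sum.cong) auto
    then show ?thesis
      unfolding bridge_eq by (simp add: algebra_simps)
  qed
  with \<open>d > 0\<close> show thesis by (rule that)
qed

lemma bridge_affine_left:
  obtains d where "d > 0" "\<And>w. z - d < w \<Longrightarrow> w < z \<Longrightarrow> bridge p u w = bridge_left_lim z - s0 * (z - w)"
proof -
  obtain d where "d > 0" and d: "\<And>x. x \<in> u ` atoms \<Longrightarrow> x \<noteq> z \<Longrightarrow> d \<le> dist z x"
    using finite_set_avoid[of "u ` atoms" z] finite_atoms by blast
  have "bridge p u w = bridge_left_lim z - s0 * (z - w)" if "z - d < w" "w < z" for w
  proof -
    have "u i \<le> w \<longleftrightarrow> u i < z" if "i \<in> atoms" for i
      using d[of "u i"] that \<open>z - d < w\<close> \<open>w < z\<close> by (cases "u i = z") (auto simp: dist_real_def)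
    then have "(\<Sum>i\<in>atoms. if u i \<le> w then p i else 0) = (\<Sum>i\<in>atoms. if u i < z then p i else 0)"
      by (intro sum.cong) auto
    then show ?thesis
      unfolding bridge_eq by (simp add: algebra_simps)
  qed
  with \<open>d > 0\<close> show thesis by (rule that)
qed

lemma bridge_le_of_less_gen_inv:
  assumes "w \<in> {0..1}" "w < gen_inv (bridge p u) y"
  shows "bridge p u w \<le> y"
proof (rule ccontr)
  assume "\<not> bridge p u w \<le> y"
  then have "gen_inv (bridge p u) y \<le> w"
    unfolding gen_inv_def using assms(1) by (intro cInf_lower) (auto intro: bdd_belowI[of _ 0])
  with assms(2) show False by simp
qed

lemma gen_inv_bridge_unit:
  assumes "y < 1"
  shows "gen_inv (bridge p u) y \<in> {0..1}"
proof -
  have "1 \<in> {w \<in> {0..1}. y < bridge p u w}"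
    using assms bridge_1 by simp
  then show ?thesis
    unfolding gen_inv_def by (auto intro: cInf_lower cInf_greatest bdd_belowI[of _ 0])
qed

lemma le_bridge_gen_inv:
  assumes "y < 1"
  shows "y \<le> bridge p u (gen_inv (bridge p u) y)"
proof (rule field_le_epsilon)
  define S where "S = {w \<in> {0..1}. y < bridge p u w}"
  define z where "z = gen_inv (bridge p u) y"
  have z: "z = Inf S" unfolding z_def S_def gen_inv_def ..
  have "S \<noteq> {}" "bdd_below S"
    using assms bridge_1 by (auto simp: S_def intro!: exI[of _ 1] bdd_belowI[of _ 0])
  obtain d where "d > 0" and affine: "\<And>w. z \<le> w \<Longrightarrow> w < z + d \<Longrightarrow> bridge p u w = bridge p u z + s0 * (w - z)"
    using bridge_affine_right[of z] by blast
  fix e :: real assume "e > 0"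
  define t where "t = min d (e / (s0 + 1))"
  have "t > 0" using \<open>d > 0\<close> \<open>e > 0\<close> s0_nonneg by (simp add: t_def)
  then obtain w where "w \<in> S" "w < z + t"
    using cInf_lessD[OF \<open>S \<noteq> {}\<close>, of "z + t"] z by auto
  moreover have "z \<le> w"
    using \<open>w \<in> S\<close> \<open>bdd_below S\<close> z by (simp add: cInf_lower)
  moreover have "s0 * t \<le> e"
    unfolding t_def using s0_nonneg \<open>e > 0\<close> by (simp add: mult_min_div_add_one_le)
  moreover have "s0 * (w - z) \<le> s0 * t"
    using s0_nonneg \<open>w < z + t\<close> by (intro mult_left_mono) auto
  ultimately have "y < bridge p u z + e"
    using affine[of w] by (auto simp: S_def t_def)
  then show "y \<le> bridge p u (gen_inv (bridge p u) y) + e"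
    by (simp add: z_def)
qed

lemma bridge_left_lim_gen_inv_le:
  assumes "y \<ge> 0" "y < 1"
  shows "bridge_left_lim (gen_inv (bridge p u) y) \<le> y"
proof -
  define z where "z = gen_inv (bridge p u) y"
  have "z \<in> {0..1}"
    using gen_inv_bridge_unit[OF assms(2)] by (simp add: z_def)
  show ?thesis
  proof (cases "z = 0")
    case True
    have "\<not> u i < 0" for i
      using u_unit[of i] by simp
    then have "(\<Sum>i\<in>atoms. if u i < 0 then p i else 0) = 0"
      by simp
    with True show ?thesis
      using assms(1) by (simp add: z_def)
  next
    case False
    with \<open>z \<in> {0..1}\<close> have "z > 0" by simp
    obtain d where "d > 0" and affine: "\<And>w. z - d < w \<Longrightarrow> w < z \<Longrightarrow> bridge p u w = bridge_left_lim z - s0 * (z - w)"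
      using bridge_affine_left[of z] by blast
    have "bridge_left_lim z \<le> y + e" if "e > 0" for e
    proof -
      define t where "t = min (min (d / 2) z) (e / (s0 + 1))"
      have "t > 0" using \<open>d > 0\<close> \<open>z > 0\<close> \<open>e > 0\<close> s0_nonneg by (simp add: t_def)
      have "s0 * t \<le> e"
        unfolding t_def using s0_nonneg \<open>e > 0\<close> by (simp add: mult_min_div_add_one_le)
      moreover have "bridge p u (z - t) \<le> y"
        using \<open>t > 0\<close> \<open>z \<in> {0..1}\<close> by (intro bridge_le_of_less_gen_inv) (auto simp: t_def z_def)
      moreover have "bridge p u (z - t) = bridge_left_lim z - s0 * t"
        using \<open>t > 0\<close> \<open>d > 0\<close> affine[of "z - t"] by (simp add: t_def)
      ultimately show ?thesis by simp
    qed
    then show ?thesis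
      unfolding z_def by (rule field_le_epsilon)
  qed
qed

lemma gen_inv_bridge_eqI:
  assumes "z \<in> {0..1}" "bridge_left_lim z \<le> y" "y < bridge p u z"
  shows "gen_inv (bridge p u) y = z"
  unfolding gen_inv_def
proof (rule cInf_eq_minimum)
  show "z \<in> {w \<in> {0..1}. y < bridge p u w}"
    using assms by simp
  show "z \<le> w" if "w \<in> {w \<in> {0..1}. y < bridge p u w}" for w
    using that assms(2) bridge_le_bridge_left_lim[of w z] by force
qed

lemma bridge_lower_lipschitz: "s0 * \<bar>y - z\<bar> \<le> \<bar>bridge p u y - bridge p u z\<bar>"
proof (cases "y \<le> z")
  case True
  then show ?thesis
    using bridge_increment_ge[of y z] by (simp add: abs_if)
next
  case False
  then show ?thesis
    using bridge_increment_ge[of z y] by (simp add: abs_if)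
qed

lemma llip_bridge: "llip (bridge p u) = s0"
  unfolding llip_def
proof (rule cSup_eq_maximum)
  show "s0 \<in> {\<kappa>. 0 \<le> \<kappa> \<and> (\<forall>y\<in>{0..1}. \<forall>z\<in>{0..1}. \<kappa> * \<bar>y - z\<bar> \<le> \<bar>bridge p u y - bridge p u z\<bar>)}"
    using s0_nonneg bridge_lower_lipschitz by simp
next
  fix \<kappa> assume "\<kappa> \<in> {\<kappa>. 0 \<le> \<kappa> \<and> (\<forall>y\<in>{0..1}. \<forall>z\<in>{0..1}. \<kappa> * \<bar>y - z\<bar> \<le> \<bar>bridge p u y - bridge p u z\<bar>)}"
  then have \<kappa>: "\<forall>y\<in>{0..1}. \<forall>z\<in>{0..1}. \<kappa> * \<bar>y - z\<bar> \<le> \<bar>bridge p u y - bridge p u z\<bar>"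
    by simp
  obtain d where "d > 0" and affine: "\<And>w. 0 \<le> w \<Longrightarrow> w < 0 + d \<Longrightarrow> bridge p u w = bridge p u 0 + s0 * (w - 0)"
    using bridge_affine_right[of 0] by blast
  define w where "w = min (d / 2) 1"
  have "w > 0" "w \<le> 1" "w < d" using \<open>d > 0\<close> by (auto simp: w_def)
  then have "\<kappa> * w \<le> s0 * w"
    using \<kappa>[rule_format, of w 0] affine[of w] s0_nonneg by simp
  with \<open>w > 0\<close> show "\<kappa> \<le> s0" by simp
qed

lemma paintbox_block_freq:
  assumes equi: "equidistributed v" and v_unit: "\<And>j. v j \<in> {0..<1}" and "z \<in> {0..1}"
  shows "(\<lambda>k. real (card ({j. j \<ge> 1 \<and> gen_inv (bridge p u) (v j) = z} \<inter> {1..k})) / k) \<longlonglongrightarrow> jump z"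
proof -
  have "(\<lambda>k. real (card ({j. j \<ge> 1 \<and> gen_inv (bridge p u) (v j) = z} \<inter> {1..k})) / k)
      \<longlonglongrightarrow> bridge p u z - bridge_left_lim z"
  proof (rule equidistributed_interval_freq[OF equi])
    show "0 \<le> bridge_left_lim z" "bridge_left_lim z \<le> bridge p u z" "bridge p u z \<le> 1"
      using \<open>z \<in> {0..1}\<close> by (simp_all add: bridge_left_lim_nonneg bridge_left_lim_le_bridge bridge_le_1)
    show "{j. j \<ge> 1 \<and> v j \<in> {bridge_left_lim z..<bridge p u z}} \<subseteq> {j. j \<ge> 1 \<and> gen_inv (bridge p u) (v j) = z}"
      using gen_inv_bridge_eqI[OF \<open>z \<in> {0..1}\<close>] by auto
    have "v j \<in> {bridge_left_lim (gen_inv (bridge p u) (v j))..bridge p u (gen_inv (bridge p u) (v j))}" for j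
      using bridge_left_lim_gen_inv_le le_bridge_gen_inv v_unit[of j] by simp
    then show "{j. j \<ge> 1 \<and> gen_inv (bridge p u) (v j) = z} \<subseteq> {j. v j \<in> {bridge_left_lim z..bridge p u z}}"
      by auto
  qed
  then show ?thesis
    by (simp add: bridge_minus_bridge_left_lim)
qed

lemma dust_paintbox_bridge:
  assumes equi: "equidistributed v" and v_unit: "\<And>j. v j \<in> {0..<1}"
  shows "dust (paintbox_partition (bridge p u) v) = s0"
proof -
  define g where "g = gen_inv (bridge p u)"
  define block where "block z = {j. j \<ge> 1 \<and> g (v j) = z}" for z
  define Z where "Z = (\<lambda>j. g (v j)) ` {1..}"
  have partition: "paintbox_partition (bridge p u) v = block ` Z"
    unfolding paintbox_partition_def block_def Z_def g_def by auto
  have Z_unit: "Z \<subseteq> {0..1}"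
    using gen_inv_bridge_unit v_unit by (auto simp: Z_def g_def)
  have freq: "asym_freq (block z) = jump z" if "z \<in> {0..1}" for z
    using paintbox_block_freq[OF equi v_unit that] unfolding asym_freq_def block_def g_def by (rule limI)
  have "inj_on block Z"
    by (rule inj_onI) (auto simp: Z_def block_def)
  then have "(\<Sum>\<^sub>\<infinity> B\<in>block ` Z. asym_freq B) = (\<Sum>\<^sub>\<infinity> z\<in>Z. asym_freq (block z))"
    by (simp add: infsum_reindex comp_def)
  also have "\<dots> = (\<Sum>\<^sub>\<infinity> z\<in>u ` atoms. jump z)"
  proof (rule infsum_cong_neutral)
    show "asym_freq (block z) = jump z" if "z \<in> Z \<inter> u ` atoms" for z
      using freq that Z_unit by auto
    show "asym_freq (block z) = 0" if "z \<in> Z - u ` atoms" for z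
    proof -
      have "jump z = 0"
        using that by (intro sum.neutral) auto
      with that Z_unit freq[of z] show ?thesis by auto
    qed
    show "jump z = 0" if "z \<in> u ` atoms - Z" for z
    proof -
      have "block z = {}"
        using that unfolding Z_def block_def by force
      moreover have "z \<in> {0..1}"
        using that u_unit by auto
      ultimately show ?thesis
        using freq[of z] by (simp add: asym_freq_def)
    qed
  qed
  also have "\<dots> = (\<Sum>z\<in>u ` atoms. jump z)"
    using finite_atoms by simp
  also have "\<dots> = (\<Sum>i\<in>atoms. \<Sum>z\<in>u ` atoms. if u i = z then p i else 0)"
    by (rule sum.swap)
  also have "\<dots> = (\<Sum>i\<in>atoms. p i)"
    using finite_atoms by (simp add: sum.delta)
  finally show ?thesis
    unfolding dust_def partition s0_def by simp
qed

end

lemma (in prob_space) AE_in_unit_interval_of_uniform: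
  fixes X :: "'a \<Rightarrow> real"
  assumes "random_variable borel X" and "distr M borel X = uniform_measure lborel {0..1}"
  shows "AE \<omega> in M. X \<omega> \<in> {0..<1}"
proof -
  have "AE x in lborel. x \<in> {0..1} \<longrightarrow> x \<in> {0..<1::real}"
    using AE_lborel_singleton[of "1::real"] by eventually_elim auto
  then have "AE x in distr M borel X. x \<in> {0..<1}"
    unfolding assms(2) by (rule AE_uniform_measureI[rotated]) auto
  then show ?thesis
    using assms(1) by (subst (asm) AE_distr_iff) auto
qed

theorem lemma6:
  fixes M :: "'a measure" and p :: "nat \<Rightarrow> real" and U V :: "nat \<Rightarrow> 'a \<Rightarrow> real"
  assumes "prob_space M"
    and "decseq p" and "\<forall>i. p i \<ge> 0" and "(\<Sum>i. p i) \<le> 1"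
    and "finite {i. p i \<noteq> 0}"
    and "prob_space.indep_vars M (\<lambda>_. borel)
           (\<lambda>k. case k of Inl i \<Rightarrow> U i | Inr i \<Rightarrow> V i) (UNIV :: (nat + nat) set)"
    and "\<forall>i. distr M borel (U i) = uniform_measure lborel {0..1}"
    and "\<forall>i. distr M borel (V i) = uniform_measure lborel {0..1}"
  shows "AE \<omega> in M. dust (paintbox_partition (bridge p (\<lambda>i. U i \<omega>)) (\<lambda>j. V j \<omega>))
                      = llip (bridge p (\<lambda>i. U i \<omega>))"
proof -
  interpret prob_space M by fact
  let ?W = "\<lambda>k. case k of Inl i \<Rightarrow> U i | Inr i \<Rightarrow> V i"
  have reindex: "indep_vars (\<lambda>_. borel) (\<lambda>i. ?W (f i)) UNIV" if "inj f" for f :: "nat \<Rightarrow> nat + nat"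
  proof -
    have "indep_vars (\<lambda>_. borel) ?W (range f)"
      using assms(6) by (rule indep_vars_subset) simp
    with \<open>inj f\<close> show ?thesis
      by (rule indep_vars_reindex)
  qed
  have indep_U: "indep_vars (\<lambda>_. borel) U UNIV" and indep_V: "indep_vars (\<lambda>_. borel) V UNIV"
    using reindex[of Inl] reindex[of Inr] by simp_all
  have "random_variable borel (U i)" "random_variable borel (V i)" for i
    using indep_U indep_V unfolding indep_vars_def by auto
  then have "AE \<omega> in M. U i \<omega> \<in> {0..<1}" "AE \<omega> in M. V i \<omega> \<in> {0..<1}" for i
    using assms(7,8) by (intro AE_in_unit_interval_of_uniform; simp)+
  then have "AE \<omega> in M. \<forall>i. U i \<omega> \<in> {0..<1}" "AE \<omega> in M. \<forall>j. V j \<omega> \<in> {0..<1}"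
    unfolding AE_all_countable by blast+
  moreover have "AE \<omega> in M. equidistributed (\<lambda>j. V j \<omega>)"
    using indep_V assms(8) by (intro equidistributed_AE) auto
  ultimately show ?thesis
  proof eventually_elim
    case (elim \<omega>)
    interpret finite_bridge p "\<lambda>i. U i \<omega>"
      using assms(3-5) elim(1) by unfold_locales (simp_all add: less_imp_le)
    show ?case
      using dust_paintbox_bridge elim(2,3) llip_bridge by simp
  qed
qed

end
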